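(* Let $M$ be a compact Riemannian manifold, $X$ a $C^1$ vector field on $M$ with flow $X_t$, and $\Lambda$ a compact $X_t$-invariant set containing no zeros of $X$. Let $T_\Lambda M=E\oplus\langle X\rangle\oplus F$ be a partially dominated splitting over $\Lambda$. If $E$ (or $F$) is either uniformly contracting or uniformly expanding, then this splitting induces a dominated splitting over $\Lambda$ for $X_t$, namely one of $E\oplus(\langle X\rangle\oplus F)$ or $(E\oplus\langle X\rangle)\oplus F$ is a dominated splitting.
   Context: $\langle X\rangle$ is the line bundle spanned by the flow direction. For a linear map $L$ and subspace $F$, $\|L|_F\|=\sup_{v\in F,\|v\|=1}\|Lv\|$. A partially dominated splitting over $\Lambda$ is a continuous $DX_t$-invariant splitting $T_\Lambda M=E\oplus\langle X\rangle\oplus F$ with $E_x\neq\{0\}$, $F_x\neq\{0\}$ for all $x\in\Lambda$, and constants $K,\lambda>0$ such that $\|DX_t|_{E_x}\|\cdot\|DX_{-t}|_{F_{X_t(x)}}\|<Ke^{-\lambda t}$ for all $x\in\Lambda$, $t>0$. A dominated splitting over $\Lambda$ is a continuous $DX_t$-invariant splitting $T_\Lambda M=G\oplus H$ with $G_x,H_x\neq\{0\}$ and constants $K,\lambda>0$ such that $\|DX_t|_{G_x}\|\cdot\|DX_{-t}|_{H_{X_t(x)}}\|<Ke^{-\lambda t}$ for all $x\in\Lambda$, $t>0$. A subbundle $E$ is uniformly contracting if there are $C,\lambda>0$ with $\|DX_t|_{E_x}\|\le Ce^{-\lambda t}$ for all $x\in\Lambda$, $t\ge 0$; uniformly expanding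 if the same holds for $DX_{-t}$ (i.e. $\|DX_{-t}|_{E_{x}}\|\le Ce^{-\lambda t}$ for $t\ge0$). *)

theory Defs
  imports "HOL-Analysis.Analysis"
begin

definition c1_submanifold :: "'a::euclidean_space set \<Rightarrow> bool" where
  "c1_submanifold M \<longleftrightarrow>
    (\<forall>x\<in>M. \<exists>V W S (h::'a \<Rightarrow> 'a) (h'::'a \<Rightarrow> 'a \<Rightarrow>\<^sub>L 'a).
        open V \<and> x \<in> V \<and> open W \<and> subspace S \<and> bij_betw h V W \<and>
        (\<forall>y\<in>V. (h has_derivative blinfun_apply (h' y)) (at y)) \<and>
        continuous_on V h' \<and>
        (\<forall>y\<in>V. bij (blinfun_apply (h' y))) \<and>
        h ` (M \<inter> V) = S \<inter> W)"

definition tangent_space :: "'a::euclidean_space set \<Rightarrow> 'a \<Rightarrow> 'a set" where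
  "tangent_space M x = {v. \<exists>(\<gamma>::real \<Rightarrow> 'a) e. e > 0 \<and> (\<forall>t\<in>{-e<..<e}. \<gamma> t \<in> M) \<and>
      \<gamma> 0 = x \<and> (\<gamma> has_vector_derivative v) (at 0)}"

definition c1_field :: "('a::euclidean_space \<Rightarrow> 'a) \<Rightarrow> bool" where
  "c1_field X \<longleftrightarrow> (\<exists>X'::'a \<Rightarrow> 'a \<Rightarrow>\<^sub>L 'a.
      (\<forall>y. (X has_derivative blinfun_apply (X' y)) (at y)) \<and> continuous_on UNIV X')"

definition subsum :: "'a::real_vector set \<Rightarrow> 'a set \<Rightarrow> 'a set" where
  "subsum A B = {a + b | a b. a \<in> A \<and> b \<in> B}"

definition restr_norm :: "('a::real_normed_vector \<Rightarrow> 'b::real_normed_vector) \<Rightarrow> 'a set \<Rightarrow> real" where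
  "restr_norm L S = (SUP v\<in>{v\<in>S. norm v = 1}. norm (L v))"

text \<open>A subspace-valued map over Lambda is continuous iff the orthogonal projections onto
  its fibres depend continuously on the base point.\<close>
definition continuous_subbundle :: "'a::euclidean_space set \<Rightarrow> ('a \<Rightarrow> 'a set) \<Rightarrow> bool" where
  "continuous_subbundle \<Lambda> E \<longleftrightarrow> (\<forall>v. continuous_on \<Lambda> (\<lambda>x. closest_point (E x) v))"

definition invariant_subbundle ::
  "'a set \<Rightarrow> (real \<Rightarrow> 'a \<Rightarrow> 'a) \<Rightarrow> (real \<Rightarrow> 'a \<Rightarrow> 'a \<Rightarrow> 'a) \<Rightarrow> ('a \<Rightarrow> 'a set) \<Rightarrow> bool" where
  "invariant_subbundle \<Lambda> \<phi> D E \<longleftrightarrow> (\<forall>x\<in>\<Lambda>. \<forall>t. D t x ` E x = E (\<phi> t x))"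

definition dominated_splitting ::
  "'a::euclidean_space set \<Rightarrow> 'a set \<Rightarrow> (real \<Rightarrow> 'a \<Rightarrow> 'a) \<Rightarrow> (real \<Rightarrow> 'a \<Rightarrow> 'a \<Rightarrow> 'a)
    \<Rightarrow> ('a \<Rightarrow> 'a set) \<Rightarrow> ('a \<Rightarrow> 'a set) \<Rightarrow> bool" where
  "dominated_splitting M \<Lambda> \<phi> D G H \<longleftrightarrow>
     (\<forall>x\<in>\<Lambda>. subspace (G x) \<and> subspace (H x) \<and> G x \<noteq> {0} \<and> H x \<noteq> {0} \<and>
        G x \<inter> H x = {0} \<and> subsum (G x) (H x) = tangent_space M x) \<and>
     invariant_subbundle \<Lambda> \<phi> D G \<and> invariant_subbundle \<Lambda> \<phi> D H \<and>
     continuous_subbundle \<Lambda> G \<and> continuous_subbundle \<Lambda> H \<and>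
     (\<exists>K lam. K > 0 \<and> lam > 0 \<and> (\<forall>x\<in>\<Lambda>. \<forall>t>0.
        restr_norm (D t x) (G x) * restr_norm (D (-t) (\<phi> t x)) (H (\<phi> t x)) < K * exp (-lam * t)))"

definition partially_dominated_splitting ::
  "'a::euclidean_space set \<Rightarrow> 'a set \<Rightarrow> ('a \<Rightarrow> 'a) \<Rightarrow> (real \<Rightarrow> 'a \<Rightarrow> 'a) \<Rightarrow> (real \<Rightarrow> 'a \<Rightarrow> 'a \<Rightarrow> 'a)
    \<Rightarrow> ('a \<Rightarrow> 'a set) \<Rightarrow> ('a \<Rightarrow> 'a set) \<Rightarrow> bool" where
  "partially_dominated_splitting M \<Lambda> X \<phi> D E F \<longleftrightarrow>
     (\<forall>x\<in>\<Lambda>. subspace (E x) \<and> subspace (F x) \<and> E x \<noteq> {0} \<and> F x \<noteq> {0} \<and>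
        (\<forall>a b c. a \<in> E x \<and> b \<in> span {X x} \<and> c \<in> F x \<and> a + b + c = 0 \<longrightarrow>
                 a = 0 \<and> b = 0 \<and> c = 0) \<and>
        subsum (subsum (E x) (span {X x})) (F x) = tangent_space M x) \<and>
     invariant_subbundle \<Lambda> \<phi> D E \<and> invariant_subbundle \<Lambda> \<phi> D F \<and>
     continuous_subbundle \<Lambda> E \<and> continuous_subbundle \<Lambda> F \<and>
     (\<exists>K lam. K > 0 \<and> lam > 0 \<and> (\<forall>x\<in>\<Lambda>. \<forall>t>0.
        restr_norm (D t x) (E x) * restr_norm (D (-t) (\<phi> t x)) (F (\<phi> t x)) < K * exp (-lam * t)))"

definition uniformly_contracting ::
  "'a::real_normed_vector set \<Rightarrow> (real \<Rightarrow> 'a \<Rightarrow> 'a \<Rightarrow> 'a) \<Rightarrow> ('a \<Rightarrow> 'a set) \<Rightarrow> bool" where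
  "uniformly_contracting \<Lambda> D E \<longleftrightarrow> (\<exists>C lam. C > 0 \<and> lam > 0 \<and>
     (\<forall>x\<in>\<Lambda>. \<forall>t\<ge>0. restr_norm (D t x) (E x) \<le> C * exp (-lam * t)))"

definition uniformly_expanding ::
  "'a::real_normed_vector set \<Rightarrow> (real \<Rightarrow> 'a \<Rightarrow> 'a \<Rightarrow> 'a) \<Rightarrow> ('a \<Rightarrow> 'a set) \<Rightarrow> bool" where
  "uniformly_expanding \<Lambda> D E \<longleftrightarrow> (\<exists>C lam. C > 0 \<and> lam > 0 \<and>
     (\<forall>x\<in>\<Lambda>. \<forall>t\<ge>0. restr_norm (D (-t) x) (E x) \<le> C * exp (-lam * t)))"

end

theory Submission
  imports Defs
begin

text \<open>The derivative maps the flow direction to itself, \<open>DX\<^sub>t (X x) = X (X\<^sub>t x)\<close>, so on the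
  compact set \<open>\<Lambda>\<close> the line \<open>\<langle>X\<rangle>\<close> is neither contracted nor expanded by more than a bounded
  factor. If \<open>E\<close> is uniformly contracting, enlarging \<open>F\<close> by \<open>\<langle>X\<rangle>\<close> changes the backward norm only
  by a factor controlled by the minimal angle between \<open>X\<close> and \<open>F\<close>, so \<open>E \<oplus> (\<langle>X\<rangle> \<oplus> F)\<close> is
  dominated; symmetrically, a uniformly expanding \<open>F\<close> makes \<open>(E \<oplus> \<langle>X\<rangle>) \<oplus> F\<close> dominated.
  The other two cases reduce to these: if \<open>F\<close> is uniformly contracting, the backward norm on \<open>F\<close>
  is at least the reciprocal of the forward one, hence grows exponentially, and the partial
  domination forces \<open>E\<close> to contract; dually a uniformly expanding \<open>E\<close> forces \<open>F\<close> to expand.\<close>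

lemma subspace_unit_vector:
  fixes S :: "'a::real_normed_vector set"
  assumes "subspace S" "S \<noteq> {0}"
  obtains v where "v \<in> S" "norm v = 1"
proof -
  obtain w where "w \<in> S" "w \<noteq> 0" using assms subspace_0 by blast
  then show ?thesis using assms(1) subspace_scale that[of "w /\<^sub>R norm w"] by auto
qed

lemma restr_norm_upper:
  assumes "bounded_linear L" "v \<in> S" "norm v = 1"
  shows "norm (L v) \<le> restr_norm L S"
proof -
  obtain B where B: "\<And>v. norm (L v) \<le> norm v * B"
    using bounded_linear.bounded[OF assms(1)] by blast
  have "bdd_above ((\<lambda>v. norm (L v)) ` {v\<in>S. norm v = 1})"
    by (intro bdd_aboveI2[where M=B]) (metis (mono_tags) B mem_Collect_eq mult_1)
  then show ?thesis
    unfolding restr_norm_def using assms(2,3) by (intro cSUP_upper) auto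
qed

lemma restr_norm_le_mult:
  assumes "bounded_linear L" "subspace S" "v \<in> S"
  shows "norm (L v) \<le> restr_norm L S * norm v"
proof (cases "v = 0")
  case True
  then show ?thesis using linear_0[OF bounded_linear.linear[OF assms(1)]] by simp
next
  case False
  have "norm (L (v /\<^sub>R norm v)) \<le> restr_norm L S"
    by (rule restr_norm_upper[OF assms(1)]) (use assms False subspace_scale in auto)
  moreover have "L (v /\<^sub>R norm v) = L v /\<^sub>R norm v"
    using linear_scale[OF bounded_linear.linear[OF assms(1)]] by simp
  ultimately show ?thesis using False by (simp add: divide_simps)
qed

lemma restr_norm_least:
  assumes "subspace S" "S \<noteq> {0}" "\<And>v. v \<in> S \<Longrightarrow> norm v = 1 \<Longrightarrow> norm (L v) \<le> B"
  shows "restr_norm L S \<le> B"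
proof -
  obtain v where "v \<in> S" "norm v = 1" using subspace_unit_vector[OF assms(1,2)] .
  then show ?thesis unfolding restr_norm_def using assms(3) by (intro cSUP_least) auto
qed

lemma restr_norm_nonneg:
  assumes "bounded_linear L" "subspace S" "S \<noteq> {0}"
  shows "0 \<le> restr_norm L S"
proof -
  obtain v where "v \<in> S" "norm v = 1" using subspace_unit_vector[OF assms(2,3)] .
  then show ?thesis using restr_norm_upper[OF assms(1)] norm_ge_zero order_trans by blast
qed

lemma restr_norm_inverse_ge_one:
  assumes L: "bounded_linear L" and L': "bounded_linear L'"
    and S: "subspace S" "S \<noteq> {0}" and T: "subspace T" "L ` S \<subseteq> T"
    and inv: "\<And>v. v \<in> S \<Longrightarrow> L' (L v) = v"
  shows "1 \<le> restr_norm L' T * restr_norm L S"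
proof -
  obtain v where v: "v \<in> S" "norm v = 1" using subspace_unit_vector[OF S] .
  have Lv: "L v \<in> T" using v T(2) by blast
  have "L v \<noteq> 0" using inv[OF v(1)] v(2) linear_0[OF bounded_linear.linear[OF L']] by auto
  then have "T \<noteq> {0}" using Lv by blast
  have "1 = norm (L' (L v))" using inv v by simp
  also have "\<dots> \<le> restr_norm L' T * norm (L v)" by (rule restr_norm_le_mult[OF L' T(1) Lv])
  also have "\<dots> \<le> restr_norm L' T * restr_norm L S"
    by (intro mult_left_mono restr_norm_upper[OF L v] restr_norm_nonneg[OF L' T(1)] \<open>T \<noteq> {0}\<close>)
  finally show ?thesis .
qed

lemma exp_decay_product_bound:
  fixes a b b' :: real
  assumes a: "0 \<le> a" "a \<le> C * exp (- mu * t)" and b: "0 \<le> b" "a * b < K * exp (- lam * t)"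
    and b': "b' \<le> \<alpha> + \<beta> * b" and "0 \<le> \<alpha>" "0 < \<beta>" "0 \<le> t"
  shows "a * b' < (\<alpha> * C + \<beta> * K) * exp (- min mu lam * t)"
proof -
  have "0 \<le> C" "0 \<le> K"
    using a b by (smt (verit) exp_gt_zero mult_nonneg_nonneg zero_le_mult_iff)+
  have decay: "exp (- mu * t) \<le> exp (- min mu lam * t)" "exp (- lam * t) \<le> exp (- min mu lam * t)"
    using \<open>0 \<le> t\<close> by (auto intro: mult_right_mono)
  have "a * b' \<le> \<alpha> * a + \<beta> * (a * b)"
    using mult_left_mono[OF b' a(1)] by (simp add: algebra_simps)
  also have "\<dots> < \<alpha> * (C * exp (- mu * t)) + \<beta> * (K * exp (- lam * t))"
    by (intro add_le_less_mono mult_left_mono mult_strict_left_mono a b) (use assms in auto)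
  also have "\<dots> \<le> (\<alpha> * C + \<beta> * K) * exp (- min mu lam * t)"
    using decay \<open>0 \<le> C\<close> \<open>0 \<le> K\<close> \<open>0 \<le> \<alpha>\<close> \<open>0 < \<beta>\<close>
    by (simp add: distrib_right mult.assoc add_mono mult_left_mono)
  finally show ?thesis .
qed

lemma lipschitz_ode_solutions_eq_nonneg:
  fixes p q :: "real \<Rightarrow> 'a::real_inner"
  assumes K1: "\<And>t. p t \<in> K" and K2: "\<And>t. q t \<in> K"
    and d1: "\<And>t. (p has_vector_derivative f (p t)) (at t)"
    and d2: "\<And>t. (q has_vector_derivative f (q t)) (at t)"
    and init: "p 0 = q 0"
    and lip: "\<And>a b. a \<in> K \<Longrightarrow> b \<in> K \<Longrightarrow> norm (f a - f b) \<le> L * norm (a - b)"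
    and t: "t \<ge> 0"
  shows "p t = q t"
proof -
  define w where "w s = p s - q s" for s
  define d where "d s = f (p s) - f (q s)" for s
  \<comment> \<open>Gronwall: the energy \<open>|w|\<^sup>2\<close> damped by \<open>exp (-2Ls)\<close> is nonincreasing and starts at \<open>0\<close>.\<close>
  define h where "h s = inner (w s) (w s) * exp (- 2 * L * s)" for s
  have dw: "(w has_vector_derivative d s) (at s)" for s
    unfolding w_def d_def by (intro has_vector_derivative_diff d1 d2)
  have dww: "((\<lambda>s. w s \<bullet> w s) has_real_derivative 2 * (w s \<bullet> d s)) (at s)" for s
  proof -
    have "((\<lambda>s. w s \<bullet> w s) has_derivative (\<lambda>x. w s \<bullet> (x *\<^sub>R d s) + (x *\<^sub>R d s) \<bullet> w s)) (at s)"
      using has_derivative_inner[OF dw[unfolded has_vector_derivative_def]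
          dw[unfolded has_vector_derivative_def]] .
    moreover have "(\<lambda>x. w s \<bullet> (x *\<^sub>R d s) + (x *\<^sub>R d s) \<bullet> w s) = (*) (2 * (w s \<bullet> d s))"
      by (auto simp: inner_commute algebra_simps)
    ultimately show ?thesis by (simp add: has_field_derivative_def)
  qed
  have dh: "(h has_real_derivative (2 * (w s \<bullet> d s) * exp (- 2 * L * s)
              + (w s \<bullet> w s) * (exp (- 2 * L * s) * (- 2 * L)))) (at s)" for s
  proof -
    have "((\<lambda>s. exp (- 2 * L * s)) has_real_derivative exp (- 2 * L * s) * (- 2 * L)) (at s)"
      by (auto intro!: derivative_eq_intros)
    from DERIV_mult[OF dww this] show ?thesis unfolding h_def by (simp add: mult.commute)
  qed
  have le: "2 * (w s \<bullet> d s) * exp (- 2 * L * s) + (w s \<bullet> w s) * (exp (- 2 * L * s) * (- 2 * L)) \<le> 0" for s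
  proof -
    have "w s \<bullet> d s \<le> norm (w s) * norm (d s)" by (rule norm_cauchy_schwarz)
    also have "\<dots> \<le> norm (w s) * (L * norm (w s))"
      unfolding d_def w_def by (intro mult_left_mono lip K1 K2) auto
    also have "\<dots> = L * (w s \<bullet> w s)" by (simp add: power2_norm_eq_inner[symmetric] power2_eq_square)
    finally have "w s \<bullet> d s \<le> L * (w s \<bullet> w s)" .
    then have "2 * (w s \<bullet> d s) * exp (- 2 * L * s) \<le> 2 * (L * (w s \<bullet> w s)) * exp (- 2 * L * s)"
      by (intro mult_right_mono) auto
    then show ?thesis by (simp add: algebra_simps)
  qed
  have "h t \<le> h 0"
    by (rule DERIV_nonpos_imp_nonincreasing[OF t]) (use dh le in blast)
  moreover have "h 0 = 0" by (simp add: h_def w_def init)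
  moreover have "h t \<ge> 0" by (simp add: h_def)
  ultimately have "(w t \<bullet> w t) * exp (- 2 * L * t) = 0" unfolding h_def by linarith
  then show ?thesis by (simp add: w_def)
qed

lemma lipschitz_ode_solutions_eq:
  fixes p q :: "real \<Rightarrow> 'a::real_inner"
  assumes K1: "\<And>t. p t \<in> K" and K2: "\<And>t. q t \<in> K"
    and d1: "\<And>t. (p has_vector_derivative f (p t)) (at t)"
    and d2: "\<And>t. (q has_vector_derivative f (q t)) (at t)"
    and init: "p 0 = q 0"
    and lip: "\<And>a b. a \<in> K \<Longrightarrow> b \<in> K \<Longrightarrow> norm (f a - f b) \<le> L * norm (a - b)"
  shows "p t = q t"
proof (cases "t \<ge> 0")
  case True
  then show ?thesis using lipschitz_ode_solutions_eq_nonneg[OF assms] by blast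
next
  case False
  have reverse: "((\<lambda>s. y (-s)) has_vector_derivative (- f (y (-s)))) (at s)"
    if "\<And>t. (y has_vector_derivative f (y t)) (at t)" for y :: "real \<Rightarrow> 'a" and s
  proof -
    have "((y \<circ> uminus) has_vector_derivative ((-1) *\<^sub>R f (y (-s)))) (at s)"
      by (intro vector_diff_chain_at that) (auto intro!: derivative_eq_intros)
    then show ?thesis by (simp add: o_def)
  qed
  have lip': "norm ((- f a) - (- f b)) \<le> L * norm (a - b)" if "a \<in> K" "b \<in> K" for a b
    using lip[OF that] by (simp add: norm_minus_commute)
  have "(\<lambda>s. p (-s)) (-t) = (\<lambda>s. q (-s)) (-t)"
    by (rule lipschitz_ode_solutions_eq_nonneg[where K=K and f="\<lambda>x. - f x"])
       (use K1 K2 reverse[OF d1] reverse[OF d2] init lip' False in auto)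
  then show ?thesis by simp
qed

lemma c1_field_lipschitz_on_compact:
  fixes X :: "'a::euclidean_space \<Rightarrow> 'a"
  assumes "c1_field X" "compact M"
  obtains L where "\<And>a b. a \<in> M \<Longrightarrow> b \<in> M \<Longrightarrow> norm (X a - X b) \<le> L * norm (a - b)"
proof -
  obtain X' :: "'a \<Rightarrow> 'a \<Rightarrow>\<^sub>L 'a" where d: "\<And>y. (X has_derivative blinfun_apply (X' y)) (at y)"
    and c: "continuous_on UNIV X'"
    using assms(1) unfolding c1_field_def by blast
  define S where "S = convex hull M"
  have "compact S" unfolding S_def by (rule compact_convex_hull[OF assms(2)])
  then have "bounded (X' ` S)"
    by (intro compact_imp_bounded compact_continuous_image continuous_on_subset[OF c]) auto
  then obtain B where B: "\<And>y. y \<in> S \<Longrightarrow> norm (X' y) \<le> B" unfolding bounded_iff by blast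
  have "norm (X a - X b) \<le> B * norm (a - b)" if "a \<in> M" "b \<in> M" for a b
  proof (rule differentiable_bound[where S=S and f'="\<lambda>y. blinfun_apply (X' y)"])
    show "convex S" unfolding S_def by simp
    show "(X has_derivative blinfun_apply (X' x)) (at x within S)" for x
      by (rule has_derivative_at_withinI[OF d])
    show "onorm (blinfun_apply (X' x)) \<le> B" if "x \<in> S" for x
      using B[OF that] by (simp add: norm_blinfun.rep_eq)
    show "a \<in> S" "b \<in> S" using that hull_subset[of M convex] unfolding S_def by blast+
  qed
  then show ?thesis by (rule that)
qed

lemma c1_field_continuous: "c1_field X \<Longrightarrow> continuous_on S X"
  unfolding c1_field_def
  by (metis continuous_at_imp_continuous_on has_derivative_continuous)

lemma subsum_span:
  assumes "subspace A" "subspace B"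
  shows "subsum A B = span (A \<union> B)"
proof -
  have sA: "span A = A" and sB: "span B = B" using assms span_eq_iff by blast+
  have "subsum A B = {x + y |x y. x \<in> span A \<and> y \<in> span B}" unfolding subsum_def sA sB by (rule refl)
  then show ?thesis using span_Un[of A B] by simp
qed

lemma subspace_subsum: "subspace A \<Longrightarrow> subspace B \<Longrightarrow> subspace (subsum A B)"
  by (simp add: subsum_span)

lemma subsum_commute: "subsum A B = subsum B A"
  unfolding subsum_def by (auto simp: add.commute) (metis add.commute)+

lemma subsum_assoc: "subsum A (subsum B C) = subsum (subsum A B) C"
  unfolding subsum_def by (auto simp: add.assoc) (metis add.assoc)+

lemma linear_image_subsum: "linear L \<Longrightarrow> L ` subsum A B = subsum (L ` A) (L ` B)"
  unfolding subsum_def by (auto simp: image_iff) (metis linear_add)+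

lemma subsum_line: "subsum S (span {v}) = {f + a *\<^sub>R v | f a. f \<in> S}"
  unfolding subsum_def span_singleton by blast

lemma closest_point_subspace_orthogonal:
  fixes S :: "'a::euclidean_space set"
  assumes "subspace S" "y \<in> S"
  shows "(v - closest_point S v) \<bullet> y = 0"
proof -
  let ?p = "closest_point S v"
  have S: "closed S" "convex S" "S \<noteq> {}"
    using assms closed_subspace subspace_imp_convex subspace_0 by blast+
  have p: "?p \<in> S" using closest_point_in_set S by blast
  have "(v - ?p) \<bullet> ((?p + y) - ?p) \<le> 0"
    by (rule closest_point_dot) (use S p assms subspace_add in auto)
  moreover have "(v - ?p) \<bullet> ((?p - y) - ?p) \<le> 0"
    by (rule closest_point_dot) (use S p assms subspace_diff in auto)
  ultimately show ?thesis by (simp add: inner_diff_right)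
qed

lemma closest_point_subspace_eqI:
  fixes S :: "'a::euclidean_space set"
  assumes S: "subspace S" and p: "p \<in> S" and orth: "\<And>y. y \<in> S \<Longrightarrow> (v - p) \<bullet> y = 0"
  shows "closest_point S v = p"
proof -
  have "dist v p \<le> dist v z" if "z \<in> S" for z
  proof -
    have "(v - p) \<bullet> (p - z) = 0" using S p that subspace_diff orth by blast
    then have "norm (v - z)^2 = norm (v - p)^2 + norm (p - z)^2"
      using norm_add_Pythagorean[of "v - p" "p - z"] by (simp add: orthogonal_def)
    then have "norm (v - p)^2 \<le> norm (v - z)^2" by simp
    then show ?thesis by (simp add: dist_norm power2_le_iff_abs_le)
  qed
  then show ?thesis
    using closest_point_unique[OF subspace_imp_convex[OF S] closed_subspace[OF S] p] by metis
qed

text \<open>Gram--Schmidt step: the projection onto \<open>S \<oplus> \<langle>X\<rangle>\<close> adds to the projection onto \<open>S\<close> the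
  component along \<open>u\<close>, the part of \<open>X\<close> orthogonal to \<open>S\<close>.\<close>
lemma closest_point_subsum_line:
  fixes S :: "'a::euclidean_space set"
  assumes S: "subspace S" and X: "X \<notin> S"
  defines "u \<equiv> X - closest_point S X"
  shows "closest_point (subsum S (span {X})) v =
           closest_point S v + (((v - closest_point S v) \<bullet> u) / (u \<bullet> u)) *\<^sub>R u"
proof (rule closest_point_subspace_eqI)
  let ?p = "closest_point S"
  let ?c = "((v - ?p v) \<bullet> u) / (u \<bullet> u)"
  have pin: "?p w \<in> S" for w using closest_point_in_set S closed_subspace subspace_0 by blast
  have "u \<noteq> 0" using X pin[of X] unfolding u_def by auto
  have uS: "u \<bullet> y = 0" if "y \<in> S" for y
    using closest_point_subspace_orthogonal[OF S that, of X] unfolding u_def by simp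
  show "subspace (subsum S (span {X}))" using S by (simp add: subspace_subsum)
  have "?p v + ?c *\<^sub>R u = (?p v - ?c *\<^sub>R ?p X) + ?c *\<^sub>R X" unfolding u_def by (simp add: algebra_simps)
  moreover have "?p v - ?c *\<^sub>R ?p X \<in> S" using pin S by (simp add: subspace_diff subspace_scale)
  ultimately show "?p v + ?c *\<^sub>R u \<in> subsum S (span {X})" unfolding subsum_line by blast
  have oS: "(v - (?p v + ?c *\<^sub>R u)) \<bullet> y = 0" if "y \<in> S" for y
    using closest_point_subspace_orthogonal[OF S that, of v] uS[OF that]
    by (simp add: inner_diff_left inner_add_left)
  have "(v - (?p v + ?c *\<^sub>R u)) \<bullet> u = (v - ?p v) \<bullet> u - ?c * (u \<bullet> u)"
    by (simp add: inner_diff_left inner_add_left algebra_simps)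
  also have "\<dots> = 0" using \<open>u \<noteq> 0\<close> by simp
  finally have oX: "(v - (?p v + ?c *\<^sub>R u)) \<bullet> X = 0"
    using oS[OF pin[of X]] unfolding u_def by (simp add: inner_diff_right)
  fix y assume "y \<in> subsum S (span {X})"
  then obtain f a where "y = f + a *\<^sub>R X" "f \<in> S" unfolding subsum_line by blast
  then show "(v - (?p v + ?c *\<^sub>R u)) \<bullet> y = 0" using oS oX by (simp add: inner_add_right)
qed

lemma continuous_on_closest_point_subbundle:
  fixes E :: "'a::euclidean_space \<Rightarrow> 'a set"
  assumes cE: "continuous_subbundle \<Lambda> E" and sE: "\<And>x. x \<in> \<Lambda> \<Longrightarrow> subspace (E x)"
    and cX: "continuous_on \<Lambda> X"
  shows "continuous_on \<Lambda> (\<lambda>x. closest_point (E x) (X x))"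
  unfolding continuous_on_def
proof (intro ballI)
  fix x0 assume x0: "x0 \<in> \<Lambda>"
  have fixed: "((\<lambda>x. closest_point (E x) (X x0)) \<longlongrightarrow> closest_point (E x0) (X x0)) (at x0 within \<Lambda>)"
    using cE x0 unfolding continuous_subbundle_def continuous_on_def by blast
  have X_tendsto: "((\<lambda>x. X x - X x0) \<longlongrightarrow> 0) (at x0 within \<Lambda>)"
    using cX x0 unfolding continuous_on_def by (simp add: LIM_zero)
  \<comment> \<open>projections are 1-Lipschitz, uniformly in the fibre\<close>
  have "norm (closest_point (E x) (X x) - closest_point (E x) (X x0)) \<le> norm (X x - X x0)"
    if "x \<in> \<Lambda>" for x
  proof -
    have "convex (E x)" "closed (E x)" "E x \<noteq> {}"
      using sE[OF that] closed_subspace subspace_imp_convex subspace_0 by blast+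
    from closest_point_lipschitz[OF this] show ?thesis by (simp add: dist_norm)
  qed
  then have "\<forall>\<^sub>F x in at x0 within \<Lambda>.
      norm (closest_point (E x) (X x) - closest_point (E x) (X x0)) \<le> norm (X x - X x0)"
    by (simp add: eventually_at_filter)
  from Lim_null_comparison[OF this tendsto_norm_zero[OF X_tendsto]]
  have "((\<lambda>x. closest_point (E x) (X x) - closest_point (E x) (X x0)) \<longlongrightarrow> 0) (at x0 within \<Lambda>)" .
  from tendsto_add[OF this fixed]
  show "((\<lambda>x. closest_point (E x) (X x)) \<longlongrightarrow> closest_point (E x0) (X x0)) (at x0 within \<Lambda>)"
    by simp
qed

lemma continuous_subbundle_subsum_line:
  fixes E :: "'a::euclidean_space \<Rightarrow> 'a set"
  assumes cE: "continuous_subbundle \<Lambda> E" and sE: "\<And>x. x \<in> \<Lambda> \<Longrightarrow> subspace (E x)"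
    and cX: "continuous_on \<Lambda> X" and XE: "\<And>x. x \<in> \<Lambda> \<Longrightarrow> X x \<notin> E x"
  shows "continuous_subbundle \<Lambda> (\<lambda>x. subsum (E x) (span {X x}))"
  unfolding continuous_subbundle_def
proof
  fix v
  define u where "u x = X x - closest_point (E x) (X x)" for x
  have cu: "continuous_on \<Lambda> u"
    unfolding u_def by (intro continuous_intros cX continuous_on_closest_point_subbundle[OF cE sE cX])
  have "u x \<bullet> u x \<noteq> 0" if "x \<in> \<Lambda>" for x
  proof -
    have "closest_point (E x) (X x) \<in> E x"
      using closest_point_in_set sE[OF that] closed_subspace subspace_0 by blast
    then show ?thesis using XE[OF that] unfolding u_def by auto
  qed
  moreover have "continuous_on \<Lambda> (\<lambda>x. closest_point (E x) v)"
    using cE unfolding continuous_subbundle_def by blast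
  ultimately have "continuous_on \<Lambda>
      (\<lambda>x. closest_point (E x) v + (((v - closest_point (E x) v) \<bullet> u x) / (u x \<bullet> u x)) *\<^sub>R u x)"
    by (intro continuous_intros cu) auto
  then show "continuous_on \<Lambda> (\<lambda>x. closest_point (subsum (E x) (span {X x})) v)"
    by (rule continuous_on_cong[THEN iffD1, rotated -1])
       (use closest_point_subsum_line[OF sE XE] in \<open>simp_all add: u_def\<close>)
qed

lemma uniform_distance_from_subbundle:
  fixes E :: "'a::euclidean_space \<Rightarrow> 'a set"
  assumes "compact \<Lambda>" "continuous_subbundle \<Lambda> E" "\<And>x. x \<in> \<Lambda> \<Longrightarrow> subspace (E x)"
    "continuous_on \<Lambda> X" "\<And>x. x \<in> \<Lambda> \<Longrightarrow> X x \<notin> E x"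
  obtains m where "m > 0" "\<And>x. x \<in> \<Lambda> \<Longrightarrow> m \<le> norm (X x - closest_point (E x) (X x))"
proof (cases "\<Lambda> = {}")
  case True
  then show ?thesis using that[of 1] by auto
next
  case False
  have "continuous_on \<Lambda> (\<lambda>x. norm (X x - closest_point (E x) (X x)))"
    by (intro continuous_intros assms(4) continuous_on_closest_point_subbundle[OF assms(2,3,4)])
  then obtain x0 where x0: "x0 \<in> \<Lambda>" and min: "\<And>y. y \<in> \<Lambda> \<Longrightarrow>
      norm (X x0 - closest_point (E x0) (X x0)) \<le> norm (X y - closest_point (E y) (X y))"
    using continuous_attains_inf[OF assms(1) False] by blast
  have "closest_point (E x0) (X x0) \<in> E x0"
    using closest_point_in_set assms(3)[OF x0] closed_subspace subspace_0 by blast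
  then have "norm (X x0 - closest_point (E x0) (X x0)) > 0" using assms(5)[OF x0] by auto
  then show ?thesis using that min by blast
qed

lemma restr_norm_subsum_line_le:
  fixes L :: "'a::euclidean_space \<Rightarrow> 'b::real_normed_vector"
  assumes L: "bounded_linear L" and S: "subspace S" "S \<noteq> {0}"
    and m: "0 < m" "m \<le> norm (v - closest_point S v)"
    and n: "norm v \<le> n" "norm (L v) \<le> n"
  shows "restr_norm L (subsum S (span {v})) \<le> n / m + (1 + n / m) * restr_norm L S"
proof (rule restr_norm_least)
  show "subspace (subsum S (span {v}))" using S by (simp add: subspace_subsum subspace_span)
  obtain f where "f \<in> S" "f \<noteq> 0" using S subspace_0 by blast
  moreover have "f = f + 0 *\<^sub>R v" by simp
  ultimately have "f \<in> subsum S (span {v})" "f \<noteq> 0" unfolding subsum_line by blast+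
  then show "subsum S (span {v}) \<noteq> {0}" by blast
  have R0: "0 \<le> restr_norm L S" using restr_norm_nonneg[OF L S] .
  fix w assume "w \<in> subsum S (span {v})" and w: "norm w = 1"
  then obtain f a where fa: "w = f + a *\<^sub>R v" "f \<in> S" unfolding subsum_line by blast
  \<comment> \<open>the coefficient along \<open>v\<close> is controlled by the distance from \<open>v\<close> to \<open>S\<close>\<close>
  have a: "\<bar>a\<bar> \<le> 1 / m"
  proof (cases "a = 0")
    case False
    have "- (f /\<^sub>R a) \<in> S" using S fa(2) subspace_neg subspace_scale by blast
    from closest_point_le[OF closed_subspace[OF S(1)] this, of v]
    have "m \<le> norm (v + f /\<^sub>R a)" using m(2) by (simp add: dist_norm)
    then have "\<bar>a\<bar> * m \<le> \<bar>a\<bar> * norm (v + f /\<^sub>R a)" by (rule mult_left_mono) simp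
    also have "\<dots> = norm (a *\<^sub>R (v + f /\<^sub>R a))" by simp
    also have "a *\<^sub>R (v + f /\<^sub>R a) = w" using False fa(1) by (simp add: algebra_simps)
    finally have "\<bar>a\<bar> * m \<le> 1" using w by simp
    then show ?thesis using m by (simp add: field_simps)
  qed (use m in simp)
  have "norm f \<le> norm w + \<bar>a\<bar> * norm v" using fa norm_triangle_ineq4[of w "a *\<^sub>R v"] by simp
  also have "\<dots> \<le> 1 + n / m" using w mult_mono[OF a n(1)] m by simp
  finally have nf: "norm f \<le> 1 + n / m" .
  have "norm (L w) \<le> norm (L f) + \<bar>a\<bar> * norm (L v)"
    using fa(1) norm_triangle_ineq[of "L f" "a *\<^sub>R L v"] bounded_linear.linear[OF L]
    by (simp add: linear_add linear_scale)
  also have "\<dots> \<le> restr_norm L S * norm f + (1 / m) * n"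
    by (intro add_mono restr_norm_le_mult[OF L S(1) fa(2)] mult_mono a n) (use m in auto)
  also have "\<dots> \<le> (1 + n / m) * restr_norm L S + n / m"
    using mult_left_mono[OF nf R0] by (simp add: mult.commute)
  finally show "norm (L w) \<le> n / m + (1 + n / m) * restr_norm L S" by simp
qed

locale c1_flow =
  fixes M :: "'a::euclidean_space set" and X :: "'a \<Rightarrow> 'a"
    and \<phi> :: "real \<Rightarrow> 'a \<Rightarrow> 'a" and D :: "real \<Rightarrow> 'a \<Rightarrow> 'a \<Rightarrow> 'a"
  assumes compact_M: "compact M" and c1_X: "c1_field X"
    and flow_0: "x \<in> M \<Longrightarrow> \<phi> 0 x = x"
    and flow_in_M: "x \<in> M \<Longrightarrow> \<phi> t x \<in> M"
    and flow_ode: "x \<in> M \<Longrightarrow> ((\<lambda>s. \<phi> s x) has_vector_derivative X (\<phi> t x)) (at t)"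
    and flow_derivative: "x \<in> M \<Longrightarrow> (\<phi> t has_derivative D t x) (at x within M)"
begin

lemma bounded_linear_D: "x \<in> M \<Longrightarrow> bounded_linear (D t x)"
  using flow_derivative has_derivative_bounded_linear by blast

lemma flow_ode_shift:
  assumes "x \<in> M"
  shows "((\<lambda>t. \<phi> (t + s) x) has_vector_derivative X (\<phi> (t + s) x)) (at t)"
proof -
  have "(((\<lambda>u. \<phi> u x) \<circ> (\<lambda>t. t + s)) has_vector_derivative (1 *\<^sub>R X (\<phi> (t + s) x))) (at t)"
    by (intro vector_diff_chain_at flow_ode assms) (auto intro!: derivative_eq_intros)
  then show ?thesis by (simp add: o_def)
qed

lemma flow_add:
  assumes x: "x \<in> M"
  shows "\<phi> t (\<phi> s x) = \<phi> (t + s) x"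
proof -
  obtain L where L: "\<And>a b. a \<in> M \<Longrightarrow> b \<in> M \<Longrightarrow> norm (X a - X b) \<le> L * norm (a - b)"
    using c1_field_lipschitz_on_compact[OF c1_X compact_M] by blast
  have sx: "\<phi> s x \<in> M" using flow_in_M x by blast
  show ?thesis
    by (rule lipschitz_ode_solutions_eq[where K=M and f=X and L=L])
       (use flow_in_M flow_ode flow_ode_shift flow_0 x sx L in auto)
qed

text \<open>Both identities below come from differentiating \<open>\<phi> t \<circ> \<gamma>\<close> along a curve \<open>\<gamma>\<close> in \<open>M\<close>:
  the orbit itself, respectively a curve realising the tangent vector.\<close>

lemma D_field:
  assumes x: "x \<in> M"
  shows "D t x (X x) = X (\<phi> t x)"
proof -
  have orbit: "((\<lambda>s. \<phi> s x) has_derivative (\<lambda>h. h *\<^sub>R X x)) (at 0)"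
    using flow_ode[OF x, of 0] flow_0[OF x] by (simp add: has_vector_derivative_def)
  have "range (\<lambda>s. \<phi> s x) \<subseteq> M" using flow_in_M[OF x] by blast
  from has_derivative_subset[OF flow_derivative[OF x] this]
  have "(\<phi> t has_derivative D t x) (at ((\<lambda>s. \<phi> s x) 0) within range (\<lambda>s. \<phi> s x))"
    using flow_0[OF x] by simp
  from has_derivative_in_compose[OF orbit this]
  have c1: "((\<lambda>s. \<phi> t (\<phi> s x)) has_derivative (\<lambda>h. D t x (h *\<^sub>R X x))) (at 0)" by simp
  have eq: "(\<lambda>s. \<phi> t (\<phi> s x)) = (\<lambda>s. \<phi> (s + t) x)"
    using flow_add[OF x] by (simp add: add.commute)
  have "((\<lambda>s. \<phi> (s + t) x) has_vector_derivative X (\<phi> (0 + t) x)) (at 0)"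
    by (rule flow_ode_shift[OF x])
  then have c2: "((\<lambda>s. \<phi> t (\<phi> s x)) has_derivative (\<lambda>h. h *\<^sub>R X (\<phi> t x))) (at 0)"
    unfolding eq has_vector_derivative_def by simp
  from fun_cong[OF has_derivative_unique[OF c1 c2], of 1] show ?thesis by simp
qed

lemma D_inverse:
  assumes x: "x \<in> M" and v: "v \<in> tangent_space M x"
  shows "D (-t) (\<phi> t x) (D t x v) = v"
proof -
  obtain \<gamma> :: "real \<Rightarrow> 'a" and e where e: "e > 0" and \<gamma>M: "\<forall>s\<in>{-e<..<e}. \<gamma> s \<in> M"
    and \<gamma>0: "\<gamma> 0 = x" and d\<gamma>: "(\<gamma> has_vector_derivative v) (at 0)"
    using v unfolding tangent_space_def by blast
  define T where "T = {-e<..<e}"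
  have T: "open T" "0 \<in> T" using e unfolding T_def by auto
  have \<gamma>T: "\<gamma> ` T \<subseteq> M" using \<gamma>M unfolding T_def by blast
  have g: "(\<gamma> has_derivative (\<lambda>h. h *\<^sub>R v)) (at 0 within T)"
    using d\<gamma> has_derivative_at_withinI unfolding has_vector_derivative_def by blast
  have "(\<phi> t has_derivative D t x) (at (\<gamma> 0) within (\<gamma> ` T))"
    using has_derivative_subset[OF flow_derivative[OF x] \<gamma>T] \<gamma>0 by simp
  from has_derivative_in_compose[OF g this]
  have c1: "((\<lambda>s. \<phi> t (\<gamma> s)) has_derivative (\<lambda>h. D t x (h *\<^sub>R v))) (at 0 within T)" by simp
  have "(\<lambda>s. \<phi> t (\<gamma> s)) ` T \<subseteq> M" using \<gamma>T flow_in_M by blast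
  then have "(\<phi> (-t) has_derivative D (-t) (\<phi> t x)) (at ((\<lambda>s. \<phi> t (\<gamma> s)) 0) within ((\<lambda>s. \<phi> t (\<gamma> s)) ` T))"
    using has_derivative_subset[OF flow_derivative[OF flow_in_M[OF x]]] \<gamma>0 by simp
  from has_derivative_in_compose[OF c1 this]
  have "((\<lambda>s. \<phi> (-t) (\<phi> t (\<gamma> s))) has_derivative (\<lambda>h. D (-t) (\<phi> t x) (D t x (h *\<^sub>R v)))) (at 0 within T)"
    by simp
  moreover have "\<phi> (-t) (\<phi> t (\<gamma> s)) = \<gamma> s" if "s \<in> T" for s
    using flow_add[of "\<gamma> s" "-t" t] flow_0 \<gamma>T that by auto
  ultimately have "(\<gamma> has_derivative (\<lambda>h. D (-t) (\<phi> t x) (D t x (h *\<^sub>R v)))) (at 0)"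
    using has_derivative_transform_within_open[OF _ T] at_within_open[OF T(2,1)] by metis
  from fun_cong[OF has_derivative_unique[OF this d\<gamma>[unfolded has_vector_derivative_def]], of 1]
  show ?thesis by simp
qed

end

lemma invariant_subbundle_subsum:
  assumes "invariant_subbundle \<Lambda> \<phi> D A" "invariant_subbundle \<Lambda> \<phi> D B"
    and "\<And>x t. x \<in> \<Lambda> \<Longrightarrow> linear (D t x)"
  shows "invariant_subbundle \<Lambda> \<phi> D (\<lambda>x. subsum (A x) (B x))"
  using assms linear_image_subsum unfolding invariant_subbundle_def by metis

lemma subsum_line_nonzero:
  assumes "subspace S" "v \<noteq> 0"
  shows "subsum S (span {v}) \<noteq> {0}"
proof -
  have "0 + 1 *\<^sub>R v \<in> subsum S (span {v})" using assms(1) subspace_0 unfolding subsum_line by blast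
  then show ?thesis using assms(2) by auto
qed

text \<open>Uniform contraction of \<open>E\<close> and uniform expansion of \<open>F\<close>, in exactly the form in which
  the two factors enter the domination inequality: for \<open>t > 0\<close>, and for \<open>F\<close> read at \<open>\<phi> t x\<close>.\<close>

definition forward_contracting ::
  "'a::real_normed_vector set \<Rightarrow> (real \<Rightarrow> 'a \<Rightarrow> 'a \<Rightarrow> 'a) \<Rightarrow> ('a \<Rightarrow> 'a set) \<Rightarrow> bool"
  where "forward_contracting \<Lambda> D E \<longleftrightarrow> (\<exists>C mu. C > 0 \<and> mu > 0 \<and>
     (\<forall>x\<in>\<Lambda>. \<forall>t>0. restr_norm (D t x) (E x) \<le> C * exp (- mu * t)))"

definition backward_contracting ::
  "'a::real_normed_vector set \<Rightarrow> (real \<Rightarrow> 'a \<Rightarrow> 'a) \<Rightarrow> (real \<Rightarrow> 'a \<Rightarrow> 'a \<Rightarrow> 'a)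
    \<Rightarrow> ('a \<Rightarrow> 'a set) \<Rightarrow> bool"
  where "backward_contracting \<Lambda> \<phi> D F \<longleftrightarrow> (\<exists>C mu. C > 0 \<and> mu > 0 \<and>
     (\<forall>x\<in>\<Lambda>. \<forall>t>0. restr_norm (D (-t) (\<phi> t x)) (F (\<phi> t x)) \<le> C * exp (- mu * t)))"

lemma uniformly_contracting_imp_forward_contracting:
  "uniformly_contracting \<Lambda> D E \<Longrightarrow> forward_contracting \<Lambda> D E"
  unfolding uniformly_contracting_def forward_contracting_def by (meson less_imp_le)

lemma uniformly_expanding_imp_backward_contracting:
  assumes "uniformly_expanding \<Lambda> D F" "\<And>x t. x \<in> \<Lambda> \<Longrightarrow> \<phi> t x \<in> \<Lambda>"
  shows "backward_contracting \<Lambda> \<phi> D F"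
  using assms unfolding uniformly_expanding_def backward_contracting_def by (meson less_imp_le)

lemma exp_decay_from_co_norm:
  fixes a b c :: real
  assumes "0 \<le> a" "0 \<le> b" "1 \<le> b * c" "a * b < K * exp (- lam * t)" "c \<le> C * exp (- mu * t)"
  shows "a \<le> (K * C) * exp (- (lam + mu) * t)"
proof -
  have "0 \<le> c" using assms(2,3) by (smt (verit) mult_nonneg_nonpos)
  have "0 \<le> K * exp (- lam * t)" using assms(1,2,4) by (smt (verit) mult_nonneg_nonneg)
  have "a \<le> a * (b * c)" using mult_left_mono[OF assms(3,1)] by simp
  also have "\<dots> = (a * b) * c" by simp
  also have "\<dots> \<le> (K * exp (- lam * t)) * (C * exp (- mu * t))"
    using assms(1,2,4,5) \<open>0 \<le> c\<close> \<open>0 \<le> K * exp (- lam * t)\<close> by (rule_tac mult_mono) auto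
  also have "\<dots> = (K * C) * exp (- (lam + mu) * t)"
    by (simp add: exp_add[symmetric] algebra_simps)
  finally show ?thesis .
qed

locale partially_dominated_flow = c1_flow M X \<phi> D
  for M :: "'a::euclidean_space set" and X \<phi> D +
  fixes \<Lambda> :: "'a set" and E F :: "'a \<Rightarrow> 'a set"
  assumes compact_\<Lambda>: "compact \<Lambda>" and \<Lambda>_subset: "\<Lambda> \<subseteq> M"
    and flow_in_\<Lambda>: "x \<in> \<Lambda> \<Longrightarrow> \<phi> t x \<in> \<Lambda>"
    and X_nonzero: "x \<in> \<Lambda> \<Longrightarrow> X x \<noteq> 0"
    and pds: "partially_dominated_splitting M \<Lambda> X \<phi> D E F"
begin

lemma subspace_E: "x \<in> \<Lambda> \<Longrightarrow> subspace (E x)"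
  and subspace_F: "x \<in> \<Lambda> \<Longrightarrow> subspace (F x)"
  and E_nonzero: "x \<in> \<Lambda> \<Longrightarrow> E x \<noteq> {0}"
  and F_nonzero: "x \<in> \<Lambda> \<Longrightarrow> F x \<noteq> {0}"
  and independent: "\<lbrakk>x \<in> \<Lambda>; a \<in> E x; b \<in> span {X x}; c \<in> F x; a + b + c = 0\<rbrakk>
    \<Longrightarrow> a = 0 \<and> b = 0 \<and> c = 0"
  and tangent_sum: "x \<in> \<Lambda> \<Longrightarrow> subsum (subsum (E x) (span {X x})) (F x) = tangent_space M x"
  and invariant_E: "invariant_subbundle \<Lambda> \<phi> D E"
  and invariant_F: "invariant_subbundle \<Lambda> \<phi> D F"
  and continuous_E: "continuous_subbundle \<Lambda> E"
  and continuous_F: "continuous_subbundle \<Lambda> F"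
  using pds unfolding partially_dominated_splitting_def by blast+

lemma domination:
  obtains K lam where "K > 0" "lam > 0" "\<And>x t. x \<in> \<Lambda> \<Longrightarrow> t > 0 \<Longrightarrow>
    restr_norm (D t x) (E x) * restr_norm (D (-t) (\<phi> t x)) (F (\<phi> t x)) < K * exp (- lam * t)"
  using pds unfolding partially_dominated_splitting_def by blast

lemma bounded_linear_D_\<Lambda>: "x \<in> \<Lambda> \<Longrightarrow> bounded_linear (D t x)"
  using bounded_linear_D \<Lambda>_subset by blast

lemma X_notin_E:
  assumes x: "x \<in> \<Lambda>"
  shows "X x \<notin> E x"
proof
  assume "X x \<in> E x"
  moreover have "- X x \<in> span {X x}" by (simp add: span_base span_neg)
  moreover have "0 \<in> F x" using subspace_0[OF subspace_F[OF x]] .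
  ultimately have "X x = 0" using independent[OF x, of "X x" "- X x" 0] by simp
  then show False using X_nonzero[OF x] by blast
qed

lemma X_notin_F:
  assumes x: "x \<in> \<Lambda>"
  shows "X x \<notin> F x"
proof
  assume "X x \<in> F x"
  then have "- X x \<in> F x" using subspace_neg[OF subspace_F[OF x]] by blast
  moreover have "X x \<in> span {X x}" by (simp add: span_base)
  moreover have "0 \<in> E x" using subspace_0[OF subspace_E[OF x]] .
  ultimately have "X x = 0" using independent[OF x, of 0 "X x" "- X x"] by simp
  then show False using X_nonzero[OF x] by blast
qed

lemma E_inter_line_F:
  assumes x: "x \<in> \<Lambda>"
  shows "E x \<inter> subsum (span {X x}) (F x) = {0}"
proof (intro subset_antisym subsetI)
  fix e assume "e \<in> E x \<inter> subsum (span {X x}) (F x)"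
  then obtain b f where "e \<in> E x" "e = b + f" "b \<in> span {X x}" "f \<in> F x" unfolding subsum_def by blast
  moreover have "- b \<in> span {X x}" "- f \<in> F x"
    using calculation span_neg subspace_neg[OF subspace_F[OF x]] by blast+
  ultimately show "e \<in> {0}" using independent[OF x, of e "- b" "- f"] by simp
qed (use subspace_0[OF subspace_E[OF x]]
      subspace_0[OF subspace_subsum[OF subspace_span subspace_F[OF x]]] in blast)

lemma E_line_inter_F:
  assumes x: "x \<in> \<Lambda>"
  shows "subsum (E x) (span {X x}) \<inter> F x = {0}"
proof (intro subset_antisym subsetI)
  fix f assume "f \<in> subsum (E x) (span {X x}) \<inter> F x"
  then obtain e b where "f \<in> F x" "f = e + b" "e \<in> E x" "b \<in> span {X x}" unfolding subsum_def by blast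
  moreover have "- f \<in> F x" using calculation subspace_neg[OF subspace_F[OF x]] by blast
  ultimately show "f \<in> {0}" using independent[OF x, of e b "- f"] by simp
qed (use subspace_0[OF subspace_subsum[OF subspace_E[OF x] subspace_span]]
      subspace_0[OF subspace_F[OF x]] in blast)

lemma E_subset_tangent:
  assumes x: "x \<in> \<Lambda>"
  shows "E x \<subseteq> tangent_space M x"
proof
  fix e assume "e \<in> E x"
  then have "e + 0 + 0 \<in> subsum (subsum (E x) (span {X x})) (F x)"
    unfolding subsum_def using subspace_0[OF subspace_F[OF x]] span_zero by blast
  then show "e \<in> tangent_space M x" using tangent_sum[OF x] by simp
qed

lemma F_subset_tangent:
  assumes x: "x \<in> \<Lambda>"
  shows "F x \<subseteq> tangent_space M x"
proof
  fix f assume "f \<in> F x"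
  then have "0 + 0 + f \<in> subsum (subsum (E x) (span {X x})) (F x)"
    unfolding subsum_def using subspace_0[OF subspace_E[OF x]] span_zero by blast
  then show "f \<in> tangent_space M x" using tangent_sum[OF x] by simp
qed

lemma invariant_line: "invariant_subbundle \<Lambda> \<phi> D (\<lambda>x. span {X x})"
  unfolding invariant_subbundle_def
proof (intro ballI allI)
  fix x t assume x: "x \<in> \<Lambda>"
  have "D t x ` span {X x} = span (D t x ` {X x})"
    by (rule span_linear_image[OF bounded_linear.linear[OF bounded_linear_D_\<Lambda>[OF x]], symmetric])
  then show "D t x ` span {X x} = span {X (\<phi> t x)}" using D_field \<Lambda>_subset x by auto
qed

lemma restr_norm_subsum_line_bound:
  assumes G: "\<And>x. x \<in> \<Lambda> \<Longrightarrow> subspace (G x)" "\<And>x. x \<in> \<Lambda> \<Longrightarrow> G x \<noteq> {0}"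
    "continuous_subbundle \<Lambda> G" "\<And>x. x \<in> \<Lambda> \<Longrightarrow> X x \<notin> G x"
  obtains \<alpha> \<beta> where "0 \<le> \<alpha>" "0 < \<beta>" "\<And>x t. x \<in> \<Lambda> \<Longrightarrow>
    restr_norm (D t x) (subsum (G x) (span {X x})) \<le> \<alpha> + \<beta> * restr_norm (D t x) (G x)"
proof -
  have cX: "continuous_on \<Lambda> X" using c1_field_continuous[OF c1_X] .
  then have "bounded (X ` \<Lambda>)" by (intro compact_imp_bounded compact_continuous_image compact_\<Lambda>)
  then obtain n where n: "n > 0" "\<And>x. x \<in> \<Lambda> \<Longrightarrow> norm (X x) \<le> n" unfolding bounded_pos by blast
  obtain m where m: "m > 0" "\<And>x. x \<in> \<Lambda> \<Longrightarrow> m \<le> norm (X x - closest_point (G x) (X x))"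
    using uniform_distance_from_subbundle[OF compact_\<Lambda> G(3) G(1) cX G(4)] by blast
  have bound: "restr_norm (D t x) (subsum (G x) (span {X x}))
      \<le> n / m + (1 + n / m) * restr_norm (D t x) (G x)"
    if x: "x \<in> \<Lambda>" for x t
  proof (rule restr_norm_subsum_line_le)
    show "bounded_linear (D t x)" "subspace (G x)" "G x \<noteq> {0}" "norm (X x) \<le> n"
      using bounded_linear_D_\<Lambda> G(1,2) n(2) x by blast+
    show "0 < m" "m \<le> norm (X x - closest_point (G x) (X x))" using m x by blast+
    show "norm (D t x (X x)) \<le> n" using D_field n(2) flow_in_\<Lambda> \<Lambda>_subset x by auto
  qed
  have "0 \<le> n / m" using n m by simp
  then show ?thesis using that[of "n / m" "1 + n / m"] bound by simp
qed

lemma restr_norm_backward_forward_ge_one: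
  assumes x: "x \<in> \<Lambda>"
    and G: "\<And>x. x \<in> \<Lambda> \<Longrightarrow> subspace (G x)" "\<And>x. x \<in> \<Lambda> \<Longrightarrow> G x \<noteq> {0}"
    "\<And>x. x \<in> \<Lambda> \<Longrightarrow> G x \<subseteq> tangent_space M x" "invariant_subbundle \<Lambda> \<phi> D G"
  shows "1 \<le> restr_norm (D (-t) (\<phi> t x)) (G (\<phi> t x)) * restr_norm (D t x) (G x)"
proof (rule restr_norm_inverse_ge_one)
  show "bounded_linear (D t x)" "bounded_linear (D (-t) (\<phi> t x))"
    using bounded_linear_D_\<Lambda> flow_in_\<Lambda> x by blast+
  show "subspace (G x)" "G x \<noteq> {0}" "subspace (G (\<phi> t x))" using G flow_in_\<Lambda> x by blast+
  show "D t x ` G x \<subseteq> G (\<phi> t x)" using G(4) x unfolding invariant_subbundle_def by blast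
  show "D (-t) (\<phi> t x) (D t x v) = v" if "v \<in> G x" for v
    using D_inverse G(3) \<Lambda>_subset x that by blast
qed

lemma restr_norm_E_nonneg: "x \<in> \<Lambda> \<Longrightarrow> 0 \<le> restr_norm (D t x) (E x)"
  using restr_norm_nonneg[OF bounded_linear_D_\<Lambda> subspace_E E_nonzero] .

lemma restr_norm_F_nonneg: "x \<in> \<Lambda> \<Longrightarrow> 0 \<le> restr_norm (D t x) (F x)"
  using restr_norm_nonneg[OF bounded_linear_D_\<Lambda> subspace_F F_nonzero] .

lemma contracting_F_imp_forward_contracting_E:
  assumes "uniformly_contracting \<Lambda> D F"
  shows "forward_contracting \<Lambda> D E"
proof -
  obtain C mu where C: "C > 0" "mu > 0"
    and contr: "\<And>x t. x \<in> \<Lambda> \<Longrightarrow> t \<ge> 0 \<Longrightarrow> restr_norm (D t x) (F x) \<le> C * exp (- mu * t)"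
    using assms unfolding uniformly_contracting_def by blast
  obtain K lam where K: "K > 0" "lam > 0" and dom: "\<And>x t. x \<in> \<Lambda> \<Longrightarrow> t > 0 \<Longrightarrow>
      restr_norm (D t x) (E x) * restr_norm (D (-t) (\<phi> t x)) (F (\<phi> t x)) < K * exp (- lam * t)"
    using domination by blast
  have "restr_norm (D t x) (E x) \<le> (K * C) * exp (- (lam + mu) * t)" if x: "x \<in> \<Lambda>" "t > 0" for x t
  proof (rule exp_decay_from_co_norm)
    show "0 \<le> restr_norm (D t x) (E x)" "0 \<le> restr_norm (D (-t) (\<phi> t x)) (F (\<phi> t x))"
      using restr_norm_E_nonneg restr_norm_F_nonneg flow_in_\<Lambda> x(1) by blast+
    show "1 \<le> restr_norm (D (-t) (\<phi> t x)) (F (\<phi> t x)) * restr_norm (D t x) (F x)"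
      by (rule restr_norm_backward_forward_ge_one[OF x(1) subspace_F F_nonzero F_subset_tangent invariant_F])
    show "restr_norm (D t x) (F x) \<le> C * exp (- mu * t)" using contr x by simp
  qed (rule dom[OF x])
  then show ?thesis
    unfolding forward_contracting_def using K C by (intro exI[of _ "K * C"] exI[of _ "lam + mu"]) auto
qed

lemma expanding_E_imp_backward_contracting_F:
  assumes "uniformly_expanding \<Lambda> D E"
  shows "backward_contracting \<Lambda> \<phi> D F"
proof -
  obtain C mu where C: "C > 0" "mu > 0"
    and expa: "\<And>x t. x \<in> \<Lambda> \<Longrightarrow> t \<ge> 0 \<Longrightarrow> restr_norm (D (-t) x) (E x) \<le> C * exp (- mu * t)"
    using assms unfolding uniformly_expanding_def by blast
  obtain K lam where K: "K > 0" "lam > 0" and dom: "\<And>x t. x \<in> \<Lambda> \<Longrightarrow> t > 0 \<Longrightarrow>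
      restr_norm (D t x) (E x) * restr_norm (D (-t) (\<phi> t x)) (F (\<phi> t x)) < K * exp (- lam * t)"
    using domination by blast
  have "restr_norm (D (-t) (\<phi> t x)) (F (\<phi> t x)) \<le> (K * C) * exp (- (lam + mu) * t)"
    if x: "x \<in> \<Lambda>" "t > 0" for x t
  proof (rule exp_decay_from_co_norm)
    show "0 \<le> restr_norm (D t x) (E x)" "0 \<le> restr_norm (D (-t) (\<phi> t x)) (F (\<phi> t x))"
      using restr_norm_E_nonneg restr_norm_F_nonneg flow_in_\<Lambda> x(1) by blast+
    show "1 \<le> restr_norm (D t x) (E x) * restr_norm (D (-t) (\<phi> t x)) (E (\<phi> t x))"
      using restr_norm_backward_forward_ge_one[OF x(1) subspace_E E_nonzero E_subset_tangent invariant_E]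
      by (simp add: mult.commute)
    show "restr_norm (D (-t) (\<phi> t x)) (F (\<phi> t x)) * restr_norm (D t x) (E x) < K * exp (- lam * t)"
      using dom[OF x] by (simp add: mult.commute)
    show "restr_norm (D (-t) (\<phi> t x)) (E (\<phi> t x)) \<le> C * exp (- mu * t)"
      using expa flow_in_\<Lambda> x by simp
  qed
  then show ?thesis
    unfolding backward_contracting_def using K C by (intro exI[of _ "K * C"] exI[of _ "lam + mu"]) auto
qed

lemma forward_contracting_E_imp_dominated:
  assumes "forward_contracting \<Lambda> D E"
  shows "dominated_splitting M \<Lambda> \<phi> D E (\<lambda>x. subsum (span {X x}) (F x))"
proof -
  let ?H = "\<lambda>x. subsum (span {X x}) (F x)"
  obtain C mu where C: "C > 0" "mu > 0"
    and contr: "\<And>x t. x \<in> \<Lambda> \<Longrightarrow> t > 0 \<Longrightarrow> restr_norm (D t x) (E x) \<le> C * exp (- mu * t)"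
    using assms unfolding forward_contracting_def by blast
  obtain K lam where K: "K > 0" "lam > 0" and dom: "\<And>x t. x \<in> \<Lambda> \<Longrightarrow> t > 0 \<Longrightarrow>
      restr_norm (D t x) (E x) * restr_norm (D (-t) (\<phi> t x)) (F (\<phi> t x)) < K * exp (- lam * t)"
    using domination by blast
  obtain \<alpha> \<beta> where \<alpha>\<beta>: "0 \<le> \<alpha>" "0 < \<beta>" and line: "\<And>x t. x \<in> \<Lambda> \<Longrightarrow>
      restr_norm (D t x) (?H x) \<le> \<alpha> + \<beta> * restr_norm (D t x) (F x)"
    using restr_norm_subsum_line_bound[OF subspace_F F_nonzero continuous_F X_notin_F]
    by (metis subsum_commute)
  have "restr_norm (D t x) (E x) * restr_norm (D (-t) (\<phi> t x)) (?H (\<phi> t x))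
          < (\<alpha> * C + \<beta> * K) * exp (- min mu lam * t)" if x: "x \<in> \<Lambda>" "t > 0" for x t
    by (rule exp_decay_product_bound[OF restr_norm_E_nonneg contr restr_norm_F_nonneg dom line \<alpha>\<beta>])
       (use x flow_in_\<Lambda> in auto)
  moreover have "0 < \<alpha> * C + \<beta> * K" using \<alpha>\<beta> C K by (simp add: add_nonneg_pos)
  ultimately have "\<exists>K lam. K > 0 \<and> lam > 0 \<and> (\<forall>x\<in>\<Lambda>. \<forall>t>0.
      restr_norm (D t x) (E x) * restr_norm (D (-t) (\<phi> t x)) (?H (\<phi> t x)) < K * exp (- lam * t))"
    using C K by (intro exI[of _ "\<alpha> * C + \<beta> * K"] exI[of _ "min mu lam"]) auto
  moreover have "invariant_subbundle \<Lambda> \<phi> D ?H"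
    using invariant_subbundle_subsum[OF invariant_line invariant_F] bounded_linear_D_\<Lambda> bounded_linear.linear
    by blast
  moreover have "continuous_subbundle \<Lambda> ?H"
    using continuous_subbundle_subsum_line[OF continuous_F subspace_F _ X_notin_F] c1_field_continuous[OF c1_X]
    by (simp add: subsum_commute)
  moreover have "subspace (?H x)" "?H x \<noteq> {0}" if "x \<in> \<Lambda>" for x
    using subspace_subsum subsum_line_nonzero subspace_F X_nonzero that subspace_span subsum_commute by metis+
  ultimately show ?thesis
    unfolding dominated_splitting_def
    by (auto simp: subspace_E E_nonzero E_inter_line_F tangent_sum subsum_assoc invariant_E continuous_E)
qed

lemma backward_contracting_F_imp_dominated:
  assumes "backward_contracting \<Lambda> \<phi> D F"
  shows "dominated_splitting M \<Lambda> \<phi> D (\<lambda>x. subsum (E x) (span {X x})) F"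
proof -
  let ?G = "\<lambda>x. subsum (E x) (span {X x})"
  obtain C mu where C: "C > 0" "mu > 0" and contr: "\<And>x t. x \<in> \<Lambda> \<Longrightarrow> t > 0 \<Longrightarrow>
      restr_norm (D (-t) (\<phi> t x)) (F (\<phi> t x)) \<le> C * exp (- mu * t)"
    using assms unfolding backward_contracting_def by blast
  obtain K lam where K: "K > 0" "lam > 0" and dom: "\<And>x t. x \<in> \<Lambda> \<Longrightarrow> t > 0 \<Longrightarrow>
      restr_norm (D (-t) (\<phi> t x)) (F (\<phi> t x)) * restr_norm (D t x) (E x) < K * exp (- lam * t)"
    using domination by (metis mult.commute)
  obtain \<alpha> \<beta> where \<alpha>\<beta>: "0 \<le> \<alpha>" "0 < \<beta>" and line: "\<And>x t. x \<in> \<Lambda> \<Longrightarrow>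
      restr_norm (D t x) (?G x) \<le> \<alpha> + \<beta> * restr_norm (D t x) (E x)"
    using restr_norm_subsum_line_bound[OF subspace_E E_nonzero continuous_E X_notin_E] by blast
  have "restr_norm (D t x) (?G x) * restr_norm (D (-t) (\<phi> t x)) (F (\<phi> t x))
          < (\<alpha> * C + \<beta> * K) * exp (- min mu lam * t)" if x: "x \<in> \<Lambda>" "t > 0" for x t
    using exp_decay_product_bound[OF restr_norm_F_nonneg contr restr_norm_E_nonneg dom line \<alpha>\<beta>]
      x flow_in_\<Lambda> by (simp add: mult.commute)
  moreover have "0 < \<alpha> * C + \<beta> * K" using \<alpha>\<beta> C K by (simp add: add_nonneg_pos)
  ultimately have "\<exists>K lam. K > 0 \<and> lam > 0 \<and> (\<forall>x\<in>\<Lambda>. \<forall>t>0.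
      restr_norm (D t x) (?G x) * restr_norm (D (-t) (\<phi> t x)) (F (\<phi> t x)) < K * exp (- lam * t))"
    using C K by (intro exI[of _ "\<alpha> * C + \<beta> * K"] exI[of _ "min mu lam"]) auto
  moreover have "invariant_subbundle \<Lambda> \<phi> D ?G"
    using invariant_subbundle_subsum[OF invariant_E invariant_line] bounded_linear_D_\<Lambda> bounded_linear.linear
    by blast
  moreover have "continuous_subbundle \<Lambda> ?G"
    using continuous_subbundle_subsum_line[OF continuous_E subspace_E _ X_notin_E] c1_field_continuous[OF c1_X]
    by simp
  moreover have "subspace (?G x)" "?G x \<noteq> {0}" if "x \<in> \<Lambda>" for x
    using subspace_subsum subsum_line_nonzero subspace_E X_nonzero that subspace_span by metis+
  ultimately show ?thesis
    unfolding dominated_splitting_def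
    by (auto simp: subspace_F F_nonzero E_line_inter_F tangent_sum invariant_F continuous_F)
qed

end

theorem proposition2p2:
  fixes M \<Lambda> :: "'a::euclidean_space set"
    and X :: "'a \<Rightarrow> 'a"
    and \<phi> :: "real \<Rightarrow> 'a \<Rightarrow> 'a"
    and D :: "real \<Rightarrow> 'a \<Rightarrow> 'a \<Rightarrow> 'a"
    and E F :: "'a \<Rightarrow> 'a set"
  assumes M: "compact M" "c1_submanifold M"
    and X: "c1_field X" "\<forall>x\<in>M. X x \<in> tangent_space M x"
    and flow: "\<forall>x\<in>M. \<phi> 0 x = x \<and> (\<forall>t. \<phi> t x \<in> M \<and>
                 ((\<lambda>s. \<phi> s x) has_vector_derivative X (\<phi> t x)) (at t))"
    and deriv: "\<forall>x\<in>M. \<forall>t. (\<phi> t has_derivative D t x) (at x within M)"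
    and Lambda: "compact \<Lambda>" "\<Lambda> \<subseteq> M" "\<forall>x\<in>\<Lambda>. \<forall>t. \<phi> t x \<in> \<Lambda>" "\<forall>x\<in>\<Lambda>. X x \<noteq> 0"
    and pds: "partially_dominated_splitting M \<Lambda> X \<phi> D E F"
    and hyp: "uniformly_contracting \<Lambda> D E \<or> uniformly_expanding \<Lambda> D E \<or>
              uniformly_contracting \<Lambda> D F \<or> uniformly_expanding \<Lambda> D F"
  shows "dominated_splitting M \<Lambda> \<phi> D E (\<lambda>x. subsum (span {X x}) (F x)) \<or>
         dominated_splitting M \<Lambda> \<phi> D (\<lambda>x. subsum (E x) (span {X x})) F"
proof -
  interpret partially_dominated_flow M X \<phi> D \<Lambda> E F
    using M(1) X(1) flow deriv Lambda pds by unfold_locales auto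
  have "forward_contracting \<Lambda> D E \<or> backward_contracting \<Lambda> \<phi> D F"
    using hyp uniformly_contracting_imp_forward_contracting contracting_F_imp_forward_contracting_E
      expanding_E_imp_backward_contracting_F
      uniformly_expanding_imp_backward_contracting[where \<phi>=\<phi>, OF _ flow_in_\<Lambda>]
    by blast
  then show ?thesis
    using forward_contracting_E_imp_dominated backward_contracting_F_imp_dominated by blast
qed

end
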